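(* Let $m\in\mathbb{N}$, $r\ge0$, and let $\lambda$ be a nonzero real number. For all integers $l,n\ge0$, \[ D^{(r)}_{m,\lambda}(l+n,x)=\sum_{j=0}^{l}\sum_{k=0}^{n}\binom{n}{k}W^{(r)}_{m,\lambda}(l,j)\,x^{j}\,(mj-l\lambda)_{n-k,\lambda}\,D^{(r)}_{m,\lambda}(k,x) \] as polynomials in $x$; equivalently, with $a^{+}$ the boson creation operator, \[ D^{(r)}_{m,\lambda}(l+n,m a^{+})=\sum_{j=0}^{l}\sum_{k=0}^{n}\binom{n}{k}W^{(r)}_{m,\lambda}(l,j)\,m^{j}(a^{+})^{j}(mj-l\lambda)_{n-k,\lambda}D^{(r)}_{m,\lambda}(k,m a^{+}). \]
   Context: $(x)_{0,\lambda}=1$ and $(x)_{n,\lambda}=x(x-\lambda)\cdots(x-(n-1)\lambda)$ for $n\ge1$; $(x)_k=x(x-1)\cdots(x-k+1)$. For $m\in\mathbb{N}$ and $r\ge0$, the degenerate $r$-Whitney numbers of the second kind $W^{(r)}_{m,\lambda}(n,k)$ are defined by $(mx+r)_{n,\lambda}=\sum_{k=0}^{n}W^{(r)}_{m,\lambda}(n,k)m^{k}(x)_k$ ($n\ge0$), and the degenerate $r$-Dowling polynomials are $D^{(r)}_{m,\lambda}(n,x)=\sum_{k=0}^{n}W^{(r)}_{m,\lambda}(n,k)x^{k}$. *)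

theory Defs
  imports Complex_Main
begin

definition dff :: "real \<Rightarrow> real \<Rightarrow> nat \<Rightarrow> real" where
  "dff x lam n = (\<Prod>i<n. x - real i * lam)"

definition ff :: "real \<Rightarrow> nat \<Rightarrow> real" where
  "ff x k = (\<Prod>i<k. x - real i)"

definition dWhitney :: "nat \<Rightarrow> real \<Rightarrow> real \<Rightarrow> nat \<Rightarrow> nat \<Rightarrow> real" where
  "dWhitney m r lam n = (THE c. (\<forall>k>n. c k = 0) \<and>
      (\<forall>x::real. dff (real m * x + r) lam n = (\<Sum>k\<le>n. c k * real m ^ k * ff x k)))"

definition dDowling :: "nat \<Rightarrow> real \<Rightarrow> real \<Rightarrow> nat \<Rightarrow> real \<Rightarrow> real" where
  "dDowling m r lam n x = (\<Sum>k\<le>n. dWhitney m r lam n k * x ^ k)"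

end

theory Submission
  imports Defs "HOL-Computational_Algebra.Polynomial"
begin

text \<open>
  With the operator \<open>A\<^sub>c = c + x + m x d/dx\<close>, the Whitney recurrence
  \<open>W(n+1,k) = W(n,k-1) + (r - n\<lambda> + m k) W(n,k)\<close> says that
  \<open>D(n,x) = A\<^bsub>r-(n-1)\<lambda>\<^esub> \<cdots> A\<^sub>r 1\<close>.  Splitting the product of \<open>l + n\<close> factors
  after the first \<open>l\<close> gives \<open>D(l+n) = \<Sum>\<^sub>j W(l,j) B(x\<^sup>j)\<close>, where \<open>B\<close> is the product
  of the remaining \<open>n\<close> factors.  Since \<open>A\<^sub>c (x\<^sup>j P) = x\<^sup>j A\<^bsub>c+mj\<^esub> P\<close>, each term
  equals \<open>x\<^sup>j\<close> times the same product started at \<open>r + (mj - l\<lambda>)\<close> instead of \<open>r\<close>,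
  and the degenerate binomial theorem expands that shift as
  \<open>\<Sum>\<^sub>k C(n,k) (mj - l\<lambda>)\<^bsub>n-k,\<lambda>\<^esub> D(k,x)\<close>.
\<close>

definition dowling_op :: "nat \<Rightarrow> real \<Rightarrow> real poly \<Rightarrow> real poly" where
  "dowling_op m c P = smult c P + [:0,1:] * P + smult (real m) ([:0,1:] * pderiv P)"

fun dowling_iter :: "nat \<Rightarrow> real \<Rightarrow> real \<Rightarrow> nat \<Rightarrow> real poly \<Rightarrow> real poly" where
  "dowling_iter m lam c 0 P = P"
| "dowling_iter m lam c (Suc n) P = dowling_op m (c - real n * lam) (dowling_iter m lam c n P)"

lemma dowling_op_add: "dowling_op m c (P + Q) = dowling_op m c P + dowling_op m c Q"
  by (simp add: dowling_op_def pderiv_add algebra_simps smult_add_right)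

lemma dowling_op_smult: "dowling_op m c (smult a P) = smult a (dowling_op m c P)"
  by (simp add: dowling_op_def pderiv_smult algebra_simps smult_add_right)

lemma dowling_op_zero: "dowling_op m c 0 = 0"
  by (simp add: dowling_op_def)

lemma dowling_op_sum: "dowling_op m c (\<Sum>k\<in>S. f k) = (\<Sum>k\<in>S. dowling_op m c (f k))"
  by (induction S rule: infinite_finite_induct) (auto simp: dowling_op_zero dowling_op_add)

lemma dowling_op_shift: "dowling_op m (c + d) P = dowling_op m c P + smult d P"
  by (simp add: dowling_op_def smult_add_left algebra_simps)

lemma dowling_op_monom_mult:
  "dowling_op m c ([:0,1:] ^ j * P) = [:0,1:] ^ j * dowling_op m (c + real m * real j) P"
proof -
  have "[:0,1:] * pderiv ([:0,1:] ^ j * P)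
      = [:0,1:] ^ j * ([:0,1:] * pderiv P) + smult (real j) ([:0,1:] ^ j * P)"
  proof (cases j)
    case (Suc i)
    show ?thesis unfolding Suc pderiv_mult pderiv_power_Suc
      by (simp add: pderiv_pCons algebra_simps)
  qed simp
  then show ?thesis
    unfolding dowling_op_def by (simp add: algebra_simps smult_add_left smult_add_right)
qed

lemma coeff_dowling_op:
  "coeff (dowling_op m c P) k
     = (c + real m * real k) * coeff P k + (if k = 0 then 0 else coeff P (k - 1))"
  by (cases k) (simp_all add: dowling_op_def coeff_pderiv mult_pCons_left algebra_simps)

lemma dowling_iter_add:
  "dowling_iter m lam c n (P + Q) = dowling_iter m lam c n P + dowling_iter m lam c n Q"
  by (induction n) (auto simp: dowling_op_add)

lemma dowling_iter_smult:
  "dowling_iter m lam c n (smult a P) = smult a (dowling_iter m lam c n P)"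
  by (induction n) (auto simp: dowling_op_smult)

lemma dowling_iter_zero: "dowling_iter m lam c n 0 = 0"
  by (induction n) (auto simp: dowling_op_zero)

lemma dowling_iter_sum:
  "dowling_iter m lam c n (\<Sum>j\<in>S. f j) = (\<Sum>j\<in>S. dowling_iter m lam c n (f j))"
  by (induction S rule: infinite_finite_induct) (auto simp: dowling_iter_zero dowling_iter_add)

lemma dowling_iter_add_steps:
  "dowling_iter m lam c (l + n) P = dowling_iter m lam (c - real l * lam) n (dowling_iter m lam c l P)"
  by (induction n) (auto simp: algebra_simps)

lemma dowling_iter_monom_mult:
  "dowling_iter m lam c n ([:0,1:] ^ j * P) = [:0,1:] ^ j * dowling_iter m lam (c + real m * real j) n P"
  by (induction n) (auto simp: dowling_op_monom_mult algebra_simps)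

lemma dff_Suc: "dff s lam (Suc k) = dff s lam k * (s - real k * lam)"
  by (simp add: dff_def)

lemma ff_Suc: "ff x (Suc k) = ff x k * (x - real k)"
  by (simp add: ff_def)

lemma dowling_iter_shift_binomial:
  "dowling_iter m lam c n P
     = (\<Sum>k\<le>n. smult (real (n choose k) * dff (c - r) lam (n - k)) (dowling_iter m lam r k P))"
proof (induction n)
  case 0
  show ?case by (simp add: dff_def)
next
  case (Suc n)
  define s where "s = c - r"
  define D where "D k = dowling_iter m lam r k P" for k
  define h where "h k = smult (real (n choose k) * dff s lam (Suc n - k)) (D k)" for k
  have step: "dowling_op m (c - real n * lam) (D k) = D (Suc k) + smult (s - real (n - k) * lam) (D k)"
    if "k \<le> n" for k
  proof -
    have "c - real n * lam = (r - real k * lam) + (s - real (n - k) * lam)"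
      using that by (simp add: s_def of_nat_diff algebra_simps)
    then show ?thesis by (simp add: dowling_op_shift D_def)
  qed
  have "dowling_iter m lam c (Suc n) P
      = (\<Sum>k\<le>n. smult (real (n choose k) * dff s lam (n - k)) (dowling_op m (c - real n * lam) (D k)))"
    using Suc by (simp add: s_def D_def dowling_op_sum dowling_op_smult)
  also have "\<dots> = (\<Sum>k\<le>n. smult (real (n choose k) * dff s lam (n - k)) (D (Suc k))) + (\<Sum>k\<le>n. h k)"
    by (simp add: h_def step sum.distrib smult_add_right Suc_diff_le dff_Suc mult.assoc)
  also have "(\<Sum>k\<le>n. h k) = (\<Sum>k\<le>Suc n. h k)"
    by (simp add: h_def)
  also have "\<dots> = h 0 + (\<Sum>k\<le>n. h (Suc k))"
    by (rule sum.atMost_Suc_shift)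
  also have "(\<Sum>k\<le>n. smult (real (n choose k) * dff s lam (n - k)) (D (Suc k))) + \<dots>
      = smult (dff s lam (Suc n)) (D 0)
        + (\<Sum>k\<le>n. smult (real (Suc n choose Suc k) * dff s lam (n - k)) (D (Suc k)))"
    by (simp add: h_def sum.distrib smult_add_left algebra_simps)
  also have "\<dots> = (\<Sum>k\<le>Suc n. smult (real (Suc n choose k) * dff s lam (Suc n - k)) (D k))"
    by (subst sum.atMost_Suc_shift) simp
  finally show ?case by (simp add: s_def D_def)
qed

lemma degree_dowling_op: "degree (dowling_op m c P) \<le> Suc (degree P)"
  by (rule degree_le) (auto simp: coeff_dowling_op coeff_eq_0)

lemma degree_dowling_iter_one: "degree (dowling_iter m lam r n 1) \<le> n"
proof (induction n)
  case (Suc n)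
  then show ?case using degree_dowling_op[of m "r - real n * lam" "dowling_iter m lam r n 1"] by simp
qed simp

text \<open>Reading \<open>x\<^sup>k\<close> as \<open>m\<^sup>k (x)\<^sub>k\<close>, the operator \<open>dowling_op m c\<close> becomes multiplication
  by \<open>m x + c\<close>, because \<open>m\<^sup>k\<^sup>+\<^sup>1 (x)\<^sub>k\<^sub>+\<^sub>1 = m\<^sup>k (x)\<^sub>k (m x - m k)\<close>.\<close>

lemma falling_expansion_dowling_op:
  assumes "degree P \<le> N"
  shows "(\<Sum>k\<le>Suc N. coeff (dowling_op m c P) k * real m ^ k * ff x k)
       = (real m * x + c) * (\<Sum>k\<le>N. coeff P k * real m ^ k * ff x k)"
proof -
  have "(\<Sum>k\<le>Suc N. coeff (dowling_op m c P) k * real m ^ k * ff x k)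
      = (\<Sum>k\<le>Suc N. (c + real m * real k) * coeff P k * real m ^ k * ff x k)
        + (\<Sum>k\<le>Suc N. (if k = 0 then 0 else coeff P (k - 1)) * real m ^ k * ff x k)"
    by (simp add: coeff_dowling_op sum.distrib algebra_simps)
  also have "(\<Sum>k\<le>Suc N. (c + real m * real k) * coeff P k * real m ^ k * ff x k)
      = (\<Sum>k\<le>N. (c + real m * real k) * coeff P k * real m ^ k * ff x k)"
    using assms by (simp add: coeff_eq_0)
  also have "(\<Sum>k\<le>Suc N. (if k = 0 then 0 else coeff P (k - 1)) * real m ^ k * ff x k)
      = (\<Sum>k\<le>N. coeff P k * real m ^ Suc k * ff x (Suc k))"
    by (subst sum.atMost_Suc_shift) simp
  finally show ?thesis
    by (simp add: ff_Suc sum_distrib_left flip: sum.distrib) (simp add: algebra_simps)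
qed

lemma falling_expansion_dowling_iter_one:
  "dff (real m * x + r) lam n = (\<Sum>k\<le>n. coeff (dowling_iter m lam r n 1) k * real m ^ k * ff x k)"
proof (induction n)
  case 0
  show ?case by (simp add: dff_def ff_def)
next
  case (Suc n)
  then show ?case
    using falling_expansion_dowling_op[OF degree_dowling_iter_one, where c = "r - real n * lam" and x = x]
    by (simp add: dff_Suc algebra_simps)
qed

lemma ff_of_nat_eq_0: "i < k \<Longrightarrow> ff (real i) k = 0"
  unfolding ff_def by (auto simp: prod_zero_iff intro: bexI[of _ i])

lemma ff_of_nat_self_neq_0: "ff (real i) i \<noteq> 0"
  unfolding ff_def by (auto simp: prod_zero_iff)

text \<open>The falling factorials are linearly independent: evaluate at \<open>x = 0, 1, \<dots>\<close> in turn.\<close>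

lemma falling_expansion_eq_0_imp_coeffs:
  fixes e :: "nat \<Rightarrow> real"
  assumes "\<forall>x. (\<Sum>k\<le>n. e k * ff x k) = 0" and "i \<le> n"
  shows "e i = 0"
  using assms(2)
proof (induction i rule: less_induct)
  case (less i)
  have "(\<Sum>k\<le>n. e k * ff (real i) k) = (\<Sum>k\<in>{i}. e k * ff (real i) k)"
    by (rule sum.mono_neutral_right)
      (use less in \<open>auto simp: ff_of_nat_eq_0 dest: linorder_neqE_nat\<close>)
  then show ?case using assms(1) ff_of_nat_self_neq_0[of i] by simp
qed

lemma dWhitney_eq_coeff:
  assumes "m \<ge> 1"
  shows "dWhitney m r lam n = coeff (dowling_iter m lam r n 1)"
  unfolding dWhitney_def
proof (rule the_equality)
  show "(\<forall>k>n. coeff (dowling_iter m lam r n 1) k = 0) \<and>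
      (\<forall>x. dff (real m * x + r) lam n = (\<Sum>k\<le>n. coeff (dowling_iter m lam r n 1) k * real m ^ k * ff x k))"
    using degree_dowling_iter_one[of m lam r n] falling_expansion_dowling_iter_one
    by (auto simp: coeff_eq_0)
next
  fix c
  assume c: "(\<forall>k>n. c k = 0) \<and> (\<forall>x. dff (real m * x + r) lam n = (\<Sum>k\<le>n. c k * real m ^ k * ff x k))"
  define e where "e k = (c k - coeff (dowling_iter m lam r n 1) k) * real m ^ k" for k
  have e_expansion: "\<forall>x. (\<Sum>k\<le>n. e k * ff x k) = 0"
    using c falling_expansion_dowling_iter_one[of m _ r lam n]
    by (simp add: e_def algebra_simps sum_subtractf)
  have "c k = coeff (dowling_iter m lam r n 1) k" if "k \<le> n" for k
  proof -
    have "e k = 0" by (rule falling_expansion_eq_0_imp_coeffs[OF e_expansion that])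
    then show ?thesis using assms by (simp add: e_def)
  qed
  moreover have "c k = coeff (dowling_iter m lam r n 1) k" if "k > n" for k
    using that c degree_dowling_iter_one[of m lam r n] by (simp add: coeff_eq_0)
  ultimately show "c = coeff (dowling_iter m lam r n 1)"
    by (meson ext not_le)
qed

lemma dowling_iter_one_monom_sum:
  "dowling_iter m lam r n 1 = (\<Sum>k\<le>n. smult (coeff (dowling_iter m lam r n 1) k) ([:0,1:] ^ k))"
  using poly_as_sum_of_monoms'[OF degree_dowling_iter_one] by (simp add: monom_altdef)

lemma dDowling_eq_poly:
  assumes "m \<ge> 1"
  shows "dDowling m r lam n x = poly (dowling_iter m lam r n 1) x"
  by (subst dowling_iter_one_monom_sum)
    (simp add: dDowling_def dWhitney_eq_coeff[OF assms] poly_sum)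

theorem theorem3p2:
  fixes m :: nat and r lam :: real and l n :: nat
  assumes "m \<ge> 1" and "r \<ge> 0" and "lam \<noteq> 0"
  shows "\<forall>x::real. dDowling m r lam (l + n) x =
    (\<Sum>j\<le>l. \<Sum>k\<le>n. real (n choose k) * dWhitney m r lam l j * x ^ j
        * dff (real m * real j - real l * lam) lam (n - k) * dDowling m r lam k x)"
proof
  fix x :: real
  define W where "W = coeff (dowling_iter m lam r l 1)"
  define D where "D k = dowling_iter m lam r k 1" for k
  have "D (l + n) = dowling_iter m lam (r - real l * lam) n (\<Sum>j\<le>l. smult (W j) ([:0,1:] ^ j * 1))"
    using dowling_iter_add_steps dowling_iter_one_monom_sum by (simp add: D_def W_def)
  also have "\<dots> = (\<Sum>j\<le>l. smult (W j)
      ([:0,1:] ^ j * dowling_iter m lam (r - real l * lam + real m * real j) n 1))"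
    by (simp add: dowling_iter_sum dowling_iter_smult dowling_iter_monom_mult del: mult_1_right)
  also have "\<dots> = (\<Sum>j\<le>l. smult (W j) ([:0,1:] ^ j *
      (\<Sum>k\<le>n. smult (real (n choose k) * dff (real m * real j - real l * lam) lam (n - k)) (D k))))"
    by (subst dowling_iter_shift_binomial[where r = r]) (simp add: D_def algebra_simps)
  finally have "poly (D (l + n)) x = (\<Sum>j\<le>l. W j * (x ^ j *
      (\<Sum>k\<le>n. real (n choose k) * dff (real m * real j - real l * lam) lam (n - k) * poly (D k) x)))"
    by (simp add: poly_sum)
  then show "dDowling m r lam (l + n) x =
    (\<Sum>j\<le>l. \<Sum>k\<le>n. real (n choose k) * dWhitney m r lam l j * x ^ j
        * dff (real m * real j - real l * lam) lam (n - k) * dDowling m r lam k x)"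
    by (simp add: dDowling_eq_poly[OF assms(1)] dWhitney_eq_coeff[OF assms(1)] W_def D_def
        sum_distrib_left algebra_simps)
qed

end
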